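(* The relation $\le_{\rm cx}$ is a preorder (reflexive and transitive) on the space $L^0$ of all real-valued random variables on an atomless probability space.
   Context: An expectation $\mathbb E[Z]$ is well-defined if $\mathbb E[\max\{Z,0\}]<\infty$ or $\mathbb E[\max\{-Z,0\}]<\infty$. $X\le_{\rm cx}Y$ means $\mathbb E[u(X)]\le\mathbb E[u(Y)]$ for all convex $u:\mathbb R\to\mathbb R$ such that both expectations are well-defined. *)

theory Defs
  imports "HOL-Probability.Probability"
begin

definition atomless :: "'a measure \<Rightarrow> bool" where
  "atomless M \<longleftrightarrow> (\<forall>A\<in>sets M. 0 < emeasure M A \<longrightarrow>
      (\<exists>B\<in>sets M. B \<subseteq> A \<and> 0 < emeasure M B \<and> emeasure M B < emeasure M A))"

definition exp_welldef :: "'a measure \<Rightarrow> ('a \<Rightarrow> real) \<Rightarrow> bool" where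
  "exp_welldef M Z \<longleftrightarrow>
     (\<integral>\<^sup>+ x. ennreal (max (Z x) 0) \<partial>M) < \<infinity> \<or> (\<integral>\<^sup>+ x. ennreal (max (- Z x) 0) \<partial>M) < \<infinity>"

text \<open>Extended-real expectation E[Z] = E[max(Z,0)] - E[max(-Z,0)]
 (meaningful when exp_welldef M Z holds).\<close>
definition ext_expectation :: "'a measure \<Rightarrow> ('a \<Rightarrow> real) \<Rightarrow> ereal" where
  "ext_expectation M Z =
     enn2ereal (\<integral>\<^sup>+ x. ennreal (max (Z x) 0) \<partial>M) - enn2ereal (\<integral>\<^sup>+ x. ennreal (max (- Z x) 0) \<partial>M)"

definition cx_le :: "'a measure \<Rightarrow> ('a \<Rightarrow> real) \<Rightarrow> ('a \<Rightarrow> real) \<Rightarrow> bool" where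
  "cx_le M X Y \<longleftrightarrow> (\<forall>u::real \<Rightarrow> real. convex_on UNIV u \<longrightarrow>
      exp_welldef M (\<lambda>x. u (X x)) \<longrightarrow> exp_welldef M (\<lambda>x. u (Y x)) \<longrightarrow>
      ext_expectation M (\<lambda>x. u (X x)) \<le> ext_expectation M (\<lambda>x. u (Y x)))"

end

theory Submission
  imports Defs
begin

text \<open>For transitivity, take a convex \<open>u\<close> for which \<open>E[u(X)]\<close> and
  \<open>E[u(Z)]\<close> are well defined. If \<open>E[u(Y)]\<close> is well defined too, chain the two inequalities.
  Otherwise \<open>E[u(Y)\<^sup>+] = \<infinity>\<close>; since \<open>max u 0\<close> is convex and \<open>E[max (u(Y)) 0]\<close> is always
  well defined, \<open>Y \<le>\<^sub>c\<^sub>x Z\<close> forces \<open>E[u(Z)\<^sup>+] = \<infinity>\<close>, hence \<open>E[u(Z)] = \<infinity>\<close> and the inequality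
  holds trivially.\<close>

lemma convex_on_max:
  fixes f g :: "'a::real_vector \<Rightarrow> real"
  assumes f: "convex_on S f" and g: "convex_on S g"
  shows "convex_on S (\<lambda>x. max (f x) (g x))"
proof (rule convex_onI)
  fix t :: real and x y assume t: "0 < t" "t < 1" and xy: "x \<in> S" "y \<in> S"
  have "f ((1 - t) *\<^sub>R x + t *\<^sub>R y) \<le> (1 - t) * f x + t * f y"
    "g ((1 - t) *\<^sub>R x + t *\<^sub>R y) \<le> (1 - t) * g x + t * g y"
    using convex_onD[OF f] convex_onD[OF g] t xy by auto
  moreover have "(1 - t) * f x + t * f y \<le> (1 - t) * max (f x) (g x) + t * max (f y) (g y)"
    "(1 - t) * g x + t * g y \<le> (1 - t) * max (f x) (g x) + t * max (f y) (g y)"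
    using t by (intro add_mono mult_left_mono; simp)+
  ultimately show "max (f ((1 - t) *\<^sub>R x + t *\<^sub>R y)) (g ((1 - t) *\<^sub>R x + t *\<^sub>R y))
      \<le> (1 - t) * max (f x) (g x) + t * max (f y) (g y)"
    by linarith
qed (use f convex_on_imp_convex in blast)

lemma
  fixes Z :: "'a \<Rightarrow> real"
  assumes "\<And>x. 0 \<le> Z x"
  shows exp_welldef_nonneg: "exp_welldef M Z"
    and ext_expectation_nonneg: "ext_expectation M Z = enn2ereal (\<integral>\<^sup>+ x. ennreal (Z x) \<partial>M)"
proof -
  have "(\<integral>\<^sup>+ x. ennreal (max (- Z x) 0) \<partial>M) = 0"
    using assms by (simp add: ennreal_eq_0_iff)
  then show "exp_welldef M Z" "ext_expectation M Z = enn2ereal (\<integral>\<^sup>+ x. ennreal (Z x) \<partial>M)"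
    using assms by (simp_all add: exp_welldef_def ext_expectation_def zero_ennreal.rep_eq max_absorb1)
qed

lemma cx_leD:
  assumes "cx_le M X Y" and "convex_on UNIV u"
    and "exp_welldef M (\<lambda>x. u (X x))" and "exp_welldef M (\<lambda>x. u (Y x))"
  shows "ext_expectation M (\<lambda>x. u (X x)) \<le> ext_expectation M (\<lambda>x. u (Y x))"
  using assms unfolding cx_le_def by blast

lemma ext_expectation_eq_infinity:
  assumes "exp_welldef M Z" and "(\<integral>\<^sup>+ x. ennreal (max (Z x) 0) \<partial>M) = \<infinity>"
  shows "ext_expectation M Z = \<infinity>"
  using assms by (simp add: exp_welldef_def ext_expectation_def top.not_eq_extremum)

lemma cx_le_positive_part:
  assumes "cx_le M Y Z" and "convex_on UNIV u"
  shows "(\<integral>\<^sup>+ x. ennreal (max (u (Y x)) 0) \<partial>M) \<le> (\<integral>\<^sup>+ x. ennreal (max (u (Z x)) 0) \<partial>M)"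
proof -
  have "convex_on UNIV (\<lambda>t. max (u t) 0)"
    using assms(2) by (intro convex_on_max) (simp_all add: convex_on_const)
  with assms(1) have "ext_expectation M (\<lambda>x. max (u (Y x)) 0) \<le> ext_expectation M (\<lambda>x. max (u (Z x)) 0)"
    by (rule cx_leD) (simp_all add: exp_welldef_nonneg)
  then show ?thesis
    by (simp add: ext_expectation_nonneg less_eq_ennreal.rep_eq)
qed

lemma cx_le_refl: "cx_le M X X"
  by (simp add: cx_le_def)

lemma cx_le_trans:
  assumes XY: "cx_le M X Y" and YZ: "cx_le M Y Z"
  shows "cx_le M X Z"
  unfolding cx_le_def
proof (intro allI impI)
  fix u :: "real \<Rightarrow> real"
  assume u: "convex_on UNIV u" and wX: "exp_welldef M (\<lambda>x. u (X x))"
    and wZ: "exp_welldef M (\<lambda>x. u (Z x))"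
  show "ext_expectation M (\<lambda>x. u (X x)) \<le> ext_expectation M (\<lambda>x. u (Z x))"
  proof (cases "exp_welldef M (\<lambda>x. u (Y x))")
    case True
    then show ?thesis
      using cx_leD[OF XY u wX] cx_leD[OF YZ u _ wZ] by (meson order_trans)
  next
    case False
    then have "(\<integral>\<^sup>+ x. ennreal (max (u (Y x)) 0) \<partial>M) = \<infinity>"
      by (simp add: exp_welldef_def less_top[symmetric])
    with cx_le_positive_part[OF YZ u]
    have "(\<integral>\<^sup>+ x. ennreal (max (u (Z x)) 0) \<partial>M) = \<infinity>"
      by (simp add: top.extremum_unique)
    then show ?thesis
      using ext_expectation_eq_infinity[OF wZ] by simp
  qed
qed

theorem proposition2:
  fixes M :: "'a measure"
  assumes "prob_space M" and "atomless M"
  shows "(\<forall>X\<in>borel_measurable M. cx_le M X X) \<and>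
         (\<forall>X\<in>borel_measurable M. \<forall>Y\<in>borel_measurable M. \<forall>Z\<in>borel_measurable M.
            cx_le M X Y \<longrightarrow> cx_le M Y Z \<longrightarrow> cx_le M X Z)"
  by (auto intro: cx_le_refl cx_le_trans)

end
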